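(* Let $G$ be a directed graph on $n$ vertices, $l\ge 1$ an integer, and $w$ a weight function such that $G_w$ is min-unique for paths of length at most $l$. Then for every pair of vertices $u,v$, $|\mathcal{P}^{2l}_w(u,v)| \le n$. Consequently, the total number of paths in $\bigcup_{u,v}\mathcal{P}^{2l}_w(u,v)$ is at most $n^3$.
   Context: A weight function on a directed graph $G=(V,E)$ is a map $w:E\to\mathbb{N}_{>0}$. $G_w$ denotes $G$ weighted by $w$; the weight $w(P)$ of a path $P$ is the sum of the weights of its edges, and the length $\mathrm{len}(P)$ is its number of edges. For vertices $u,v$ and integer $i\ge 0$, let $\mathcal{P}^i_w(u,v)$ be the set of paths from $u$ to $v$ of length at most $i$ that have minimum weight among all paths from $u$ to $v$ of length at most $i$. $G_w$ is min-unique for paths of length at most $i$ if $|\mathcal{P}^i_w(u,v)|\le 1$ for every pair of vertices $u,v$. *)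

theory Defs
  imports Main
begin

definition is_path :: "'a set \<Rightarrow> ('a \<times> 'a) set \<Rightarrow> 'a list \<Rightarrow> 'a \<Rightarrow> 'a \<Rightarrow> bool" where
  "is_path V E p u v \<longleftrightarrow> p \<noteq> [] \<and> hd p = u \<and> last p = v \<and> distinct p \<and> set p \<subseteq> V
     \<and> (\<forall>e \<in> set (zip p (tl p)). e \<in> E)"

definition path_len :: "'a list \<Rightarrow> nat" where
  "path_len p = length p - 1"

definition path_weight :: "('a \<times> 'a \<Rightarrow> nat) \<Rightarrow> 'a list \<Rightarrow> nat" where
  "path_weight w p = sum_list (map w (zip p (tl p)))"

definition paths_upto :: "'a set \<Rightarrow> ('a \<times> 'a) set \<Rightarrow> nat \<Rightarrow> 'a \<Rightarrow> 'a \<Rightarrow> 'a list set" where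
  "paths_upto V E i u v = {p. is_path V E p u v \<and> path_len p \<le> i}"

definition min_paths :: "'a set \<Rightarrow> ('a \<times> 'a) set \<Rightarrow> ('a \<times> 'a \<Rightarrow> nat) \<Rightarrow> nat \<Rightarrow> 'a \<Rightarrow> 'a \<Rightarrow> 'a list set" where
  "min_paths V E w i u v = {p \<in> paths_upto V E i u v.
      \<forall>q \<in> paths_upto V E i u v. path_weight w p \<le> path_weight w q}"

definition min_unique :: "'a set \<Rightarrow> ('a \<times> 'a) set \<Rightarrow> ('a \<times> 'a \<Rightarrow> nat) \<Rightarrow> nat \<Rightarrow> bool" where
  "min_unique V E w i \<longleftrightarrow> (\<forall>u v. card (min_paths V E w i u v) \<le> 1)"

end

theory Submission
  imports Defs
begin

text \<open>Cut a minimum-weight path P of length at most 2l from u to v at its vertex x of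
  index min l (len P). Both halves are minimum-weight paths of length at most l (a
  strictly lighter replacement of either half would give a lighter walk, hence a lighter
  path, of length at most 2l), so by min-uniqueness each half is determined by x. Hence
  P is determined by the vertex x, which gives at most n such paths for each pair u, v.\<close>

text \<open>The splitting lemmas below are used only in instantiated form: as rewrite rules
  they loop, since for b = [] the left-hand side a @ [x] reappears on the right.\<close>
lemma zip_tl_append_Cons:
  "zip (a @ x # b) (tl (a @ x # b)) = zip (a @ [x]) (tl (a @ [x])) @ zip (x # b) b"
proof (induction a)
  case (Cons c a)
  then show ?case by (cases a) auto
qed simp

lemma path_weight_append_Cons:
  "path_weight w (a @ x # b) = path_weight w (a @ [x]) + path_weight w (x # b)"
  unfolding path_weight_def zip_tl_append_Cons[of a x b] by simp

lemma path_len_append_Cons: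
  "path_len (a @ x # b) = path_len (a @ [x]) + path_len (x # b)"
  unfolding path_len_def by simp

definition is_walk :: "'a set \<Rightarrow> ('a \<times> 'a) set \<Rightarrow> 'a list \<Rightarrow> 'a \<Rightarrow> 'a \<Rightarrow> bool" where
  "is_walk V E p u v \<longleftrightarrow> p \<noteq> [] \<and> hd p = u \<and> last p = v \<and> set p \<subseteq> V
     \<and> (\<forall>e \<in> set (zip p (tl p)). e \<in> E)"

lemma is_path_imp_is_walk: "is_path V E p u v \<Longrightarrow> is_walk V E p u v"
  unfolding is_path_def is_walk_def by auto

lemma is_walk_append_Cons_iff:
  "is_walk V E (a @ x # b) u v \<longleftrightarrow> is_walk V E (a @ [x]) u x \<and> is_walk V E (x # b) x v"
  unfolding is_walk_def zip_tl_append_Cons[of a x b] by (cases a) auto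

lemma is_path_append_ConsD:
  assumes "is_path V E (a @ x # b) u v"
  shows "is_path V E (a @ [x]) u x" and "is_path V E (x # b) x v"
  using assms unfolding is_path_def zip_tl_append_Cons[of a x b] by (cases a; auto)+

text \<open>Cutting out a closed subwalk does not increase the weight, since weights are
  natural numbers.\<close>
lemma walk_shortcut:
  assumes "is_walk V E p u v"
  shows "\<exists>q. is_path V E q u v \<and> length q \<le> length p \<and> path_weight w q \<le> path_weight w p"
  using assms
proof (induction "length p" arbitrary: p rule: less_induct)
  case less
  show ?case
  proof (cases "distinct p")
    case True
    with less.prems show ?thesis unfolding is_walk_def is_path_def by auto
  next
    case False
    then obtain xs ys zs y where p: "p = xs @ y # ys @ y # zs"
      using not_distinct_decomp by fastforce
    let ?p' = "xs @ y # zs"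
    have "is_walk V E (xs @ [y]) u y" "is_walk V E (y # zs) y v"
      using less.prems is_walk_append_Cons_iff[of V E xs y "ys @ y # zs"]
        is_walk_append_Cons_iff[of V E "xs @ y # ys" y zs]
      unfolding p by auto
    then have "is_walk V E ?p' u v" using is_walk_append_Cons_iff[of V E xs y zs] by blast
    moreover have "length ?p' < length p" using p by simp
    ultimately obtain q where q: "is_path V E q u v" "length q \<le> length ?p'"
        "path_weight w q \<le> path_weight w ?p'"
      using less.hyps by blast
    have "path_weight w ?p' \<le> path_weight w p"
      using path_weight_append_Cons[of w xs y "ys @ y # zs"]
        path_weight_append_Cons[of w "y # ys" y zs] path_weight_append_Cons[of w xs y zs]
      unfolding p by simp
    with q \<open>length ?p' < length p\<close> show ?thesis by fastforce
  qed
qed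

lemma min_paths_weight_le_walk:
  assumes P: "P \<in> min_paths V E w i u v"
    and q: "is_walk V E q u v" "path_len q \<le> i"
  shows "path_weight w P \<le> path_weight w q"
proof -
  obtain r where r: "is_path V E r u v" "length r \<le> length q" "path_weight w r \<le> path_weight w q"
    using walk_shortcut[OF q(1)] by blast
  have "path_len r \<le> i" using r(2) q(2) unfolding path_len_def by simp
  with P r(1) have "path_weight w P \<le> path_weight w r"
    unfolding min_paths_def paths_upto_def by blast
  with r(3) show ?thesis by simp
qed

lemma min_paths_prefix:
  assumes P: "a @ x # b \<in> min_paths V E w m u v"
    and "path_len (a @ [x]) \<le> i" and "i + path_len (x # b) \<le> m"
  shows "a @ [x] \<in> min_paths V E w i u x"
  unfolding min_paths_def paths_upto_def
proof (intro CollectI conjI ballI)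
  have path: "is_path V E (a @ x # b) u v"
    using P unfolding min_paths_def paths_upto_def by blast
  show "is_path V E (a @ [x]) u x" "path_len (a @ [x]) \<le> i"
    using is_path_append_ConsD(1)[OF path] assms(2) by auto
  fix q assume "q \<in> {p. is_path V E p u x \<and> path_len p \<le> i}"
  then have q: "is_path V E q u x" "path_len q \<le> i" by auto
  then obtain q' where q': "q = q' @ [x]"
    unfolding is_path_def by (metis append_butlast_last_id)
  have "is_walk V E (q' @ x # b) u v"
    using is_walk_append_Cons_iff[of V E q' x b] is_path_imp_is_walk[OF q(1)]
      is_path_imp_is_walk[OF is_path_append_ConsD(2)[OF path]]
    unfolding q' by blast
  moreover have "path_len (q' @ x # b) \<le> m"
    using q(2) assms(3) path_len_append_Cons[of q' x b] unfolding q' by simp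
  ultimately have "path_weight w (a @ x # b) \<le> path_weight w (q' @ x # b)"
    using min_paths_weight_le_walk[OF P] by blast
  then show "path_weight w (a @ [x]) \<le> path_weight w q"
    using path_weight_append_Cons[of w a x b] path_weight_append_Cons[of w q' x b]
    unfolding q' by simp
qed

lemma min_paths_suffix:
  assumes P: "a @ x # b \<in> min_paths V E w m u v"
    and "path_len (x # b) \<le> j" and "path_len (a @ [x]) + j \<le> m"
  shows "x # b \<in> min_paths V E w j x v"
  unfolding min_paths_def paths_upto_def
proof (intro CollectI conjI ballI)
  have path: "is_path V E (a @ x # b) u v"
    using P unfolding min_paths_def paths_upto_def by blast
  show "is_path V E (x # b) x v" "path_len (x # b) \<le> j"
    using is_path_append_ConsD(2)[OF path] assms(2) by auto
  fix q assume "q \<in> {p. is_path V E p x v \<and> path_len p \<le> j}"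
  then have q: "is_path V E q x v" "path_len q \<le> j" by auto
  then obtain q' where q': "q = x # q'"
    unfolding is_path_def by (metis list.collapse)
  have "is_walk V E (a @ x # q') u v"
    using is_walk_append_Cons_iff[of V E a x q'] is_path_imp_is_walk[OF q(1)]
      is_path_imp_is_walk[OF is_path_append_ConsD(1)[OF path]]
    unfolding q' by blast
  moreover have "path_len (a @ x # q') \<le> m"
    using q(2) assms(3) path_len_append_Cons[of a x q'] unfolding q' by simp
  ultimately have "path_weight w (a @ x # b) \<le> path_weight w (a @ x # q')"
    using min_paths_weight_le_walk[OF P] by blast
  then show "path_weight w (x # b) \<le> path_weight w q"
    using path_weight_append_Cons[of w a x b] path_weight_append_Cons[of w a x q']
    unfolding q' by simp
qed

lemma finite_min_paths:
  assumes "finite V"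
  shows "finite (min_paths V E w i u v)"
proof -
  have "min_paths V E w i u v \<subseteq> {xs. set xs \<subseteq> V \<and> length xs \<le> card V}"
    unfolding min_paths_def paths_upto_def is_path_def
    using assms by (auto simp: card_mono distinct_card[symmetric])
  then show ?thesis using finite_lists_length_le[OF assms] finite_subset by blast
qed

lemma min_unique_eq:
  assumes "finite V" "min_unique V E w i"
    and "p \<in> min_paths V E w i u v" "q \<in> min_paths V E w i u v"
  shows "p = q"
  using assms finite_min_paths[OF assms(1)] card_le_Suc0_iff_eq
  unfolding min_unique_def by (metis One_nat_def)

lemma min_paths_split_at:
  assumes P: "P \<in> min_paths V E w (i + j) u v" and k: "k = min i (path_len P)"
  shows "take (Suc k) P \<in> min_paths V E w i u (P ! k)"
    and "drop k P \<in> min_paths V E w j (P ! k) v"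
proof -
  have "P \<noteq> []" "path_len P \<le> i + j"
    using P unfolding min_paths_def paths_upto_def is_path_def by auto
  then have "k < length P" using k unfolding path_len_def by (cases P) auto
  then have decomp: "P = take k P @ P ! k # drop (Suc k) P"
    and lens: "path_len (take k P @ [P ! k]) = k" "path_len (P ! k # drop (Suc k) P) = path_len P - k"
    by (simp_all add: id_take_nth_drop path_len_def)
  have P': "take k P @ P ! k # drop (Suc k) P \<in> min_paths V E w (i + j) u v"
    using P decomp by simp
  have "take k P @ [P ! k] \<in> min_paths V E w i u (P ! k)"
    by (rule min_paths_prefix[OF P']) (use lens k \<open>path_len P \<le> i + j\<close> in \<open>auto simp: min_def\<close>)
  then show "take (Suc k) P \<in> min_paths V E w i u (P ! k)"
    using \<open>k < length P\<close> by (simp add: take_Suc_conv_app_nth)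
  have "P ! k # drop (Suc k) P \<in> min_paths V E w j (P ! k) v"
    by (rule min_paths_suffix[OF P']) (use lens k \<open>path_len P \<le> i + j\<close> in \<open>auto simp: min_def\<close>)
  then show "drop k P \<in> min_paths V E w j (P ! k) v"
    using \<open>k < length P\<close> by (simp add: Cons_nth_drop_Suc)
qed

lemma card_min_paths_add_le:
  assumes "finite V" "min_unique V E w i" "min_unique V E w j"
  shows "card (min_paths V E w (i + j) u v) \<le> card V"
proof -
  let ?M = "min_paths V E w (i + j) u v"
  define k where "k P = min i (path_len P)" for P :: "'a list"
  define mid where "mid P = P ! k P" for P :: "'a list"
  have k_less: "k P < length P" if "P \<in> ?M" for P
    using that unfolding k_def min_paths_def paths_upto_def is_path_def path_len_def
    by (auto simp: neq_Nil_conv)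
  have "inj_on mid ?M"
  proof (rule inj_onI)
    fix P Q assume P: "P \<in> ?M" and Q: "Q \<in> ?M" and eq: "mid P = mid Q"
    have take_eq: "take (Suc (k P)) P = take (Suc (k Q)) Q"
      using min_unique_eq[OF assms(1,2) min_paths_split_at(1)[OF P k_def]]
        min_paths_split_at(1)[OF Q k_def] eq
      unfolding mid_def by simp
    have drop_eq: "drop (k P) P = drop (k Q) Q"
      using min_unique_eq[OF assms(1,3) min_paths_split_at(2)[OF P k_def]]
        min_paths_split_at(2)[OF Q k_def] eq
      unfolding mid_def by simp
    have "Suc (k P) = Suc (k Q)"
      using arg_cong[OF take_eq, of length] k_less[OF P] k_less[OF Q] by simp
    then have "take (k P) P = take (k Q) Q"
      using arg_cong[OF take_eq, of "take (k P)"] by simp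
    then show "P = Q"
      using drop_eq by (metis append_take_drop_id)
  qed
  moreover have "mid ` ?M \<subseteq> V"
  proof
    fix x assume "x \<in> mid ` ?M"
    then obtain P where P: "P \<in> ?M" "x = mid P" by blast
    then have "set P \<subseteq> V"
      unfolding min_paths_def paths_upto_def is_path_def by blast
    then show "x \<in> V" using P nth_mem[OF k_less[OF P(1)]] unfolding mid_def by blast
  qed
  ultimately show ?thesis using card_inj_on_le assms(1) by blast
qed

theorem lemma5:
  fixes V :: "'a set" and E :: "('a \<times> 'a) set" and w :: "'a \<times> 'a \<Rightarrow> nat"
    and n l :: nat
  assumes "finite V" and "E \<subseteq> V \<times> V" and "card V = n"
    and "l \<ge> 1"
    and "\<forall>e \<in> E. w e > 0"
    and "min_unique V E w l"
  shows "(\<forall>u v. card (min_paths V E w (2 * l) u v) \<le> n)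
    \<and> card (\<Union>u\<in>V. \<Union>v\<in>V. min_paths V E w (2 * l) u v) \<le> n ^ 3"
proof -
  have pair: "card (min_paths V E w (2 * l) u v) \<le> n" for u v
    using card_min_paths_add_le[OF assms(1) assms(6) assms(6)] assms(3) by (simp add: mult_2)
  have "card (\<Union>u\<in>V. \<Union>v\<in>V. min_paths V E w (2 * l) u v)
      \<le> (\<Sum>u\<in>V. \<Sum>v\<in>V. card (min_paths V E w (2 * l) u v))"
    by (intro card_UN_le[THEN order_trans] sum_mono card_UN_le assms(1))
  also have "\<dots> \<le> (\<Sum>u\<in>V. \<Sum>v\<in>V. n)" by (intro sum_mono pair)
  also have "\<dots> = n ^ 3" using assms(3) by (simp add: power3_eq_cube)
  finally show ?thesis using pair by blast
qed

end
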